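(* Suppose a TSP instance is formed by placing $n$ points independently and uniformly at random in the unit square $[0,1]^2$. Then the expected value of the ratio of the length of the worst (longest) local optimum of X-opt to the length of an optimal tour on this instance is $\Omega(\sqrt{n})$.
   Context: Euclidean TSP in the plane: given a finite set $X \subset \mathbb{R}^2$, a tour is a Hamiltonian cycle on $X$; edge $\{x,y\}$ has length equal to the Euclidean distance $d(x,y)$ and the length of a tour is the sum of its edge lengths. For an edge $e=\{x,y\}$, $L(e)$ denotes the closed line segment from $x$ to $y$. A tour is noncrossing if no two of its edges have intersecting line segments (other than at a shared endpoint). X-opt is the local search heuristic that repeatedly replaces two edges of the tour whose line segments intersect by two other edges so as to obtain a tour again; its local optima are exactly the noncrossing tours. *)

theory Defs
  imports "HOL-Probability.Probability"
begin

type_synonym point = "real \<times> real"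

definition is_tour :: "point set \<Rightarrow> point list \<Rightarrow> bool" where
  "is_tour X xs \<longleftrightarrow> distinct xs \<and> set xs = X \<and> length xs \<ge> 3"

definition tour_edge :: "point list \<Rightarrow> nat \<Rightarrow> point set" where
  "tour_edge xs i = {xs ! i, xs ! (Suc i mod length xs)}"

definition edge_seg :: "point list \<Rightarrow> nat \<Rightarrow> point set" where
  "edge_seg xs i = closed_segment (xs ! i) (xs ! (Suc i mod length xs))"

definition tour_length :: "point list \<Rightarrow> real" where
  "tour_length xs = (\<Sum>i<length xs. dist (xs ! i) (xs ! (Suc i mod length xs)))"

definition noncrossing :: "point list \<Rightarrow> bool" where
  "noncrossing xs \<longleftrightarrow>
     (\<forall>i<length xs. \<forall>j<length xs. i \<noteq> j \<longrightarrow>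
        edge_seg xs i \<inter> edge_seg xs j \<subseteq> tour_edge xs i \<inter> tour_edge xs j)"

definition opt_length :: "point set \<Rightarrow> real" where
  "opt_length X = Min (tour_length ` {xs. is_tour X xs})"

text \<open>Length of the worst (longest) local optimum of X-opt, i.e. of the longest
  noncrossing tour.\<close>
definition worst_xopt_length :: "point set \<Rightarrow> real" where
  "worst_xopt_length X = Max (tour_length ` {xs. is_tour X xs \<and> noncrossing xs})"

definition unit_square :: "point set" where
  "unit_square = cbox (0,0) (1,1)"

definition random_instance :: "nat \<Rightarrow> (nat \<Rightarrow> point) measure" where
  "random_instance n = PiM {..<n} (\<lambda>_. uniform_measure lborel unit_square)"

end

theory Submission
  imports Defs
begin

text \<open>Let P and Q be the lexicographically first and last points. Visiting P, then the
  points strictly below the line PQ in lexicographic order, then Q, then the remaining points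
  in reverse lexicographic order gives a noncrossing tour: each of the two chains is
  lexicographically monotone, hence free of crossings, and the line PQ separates them. Its
  length is at least that of the lower chain, which pays at least the distance between any two
  of its points lying in a common vertical column, summed over disjoint columns.

  For n uniform random points, call column k (x-range [k/n, (k+1/2)/n], 1 \<le> k \<le> n - 2) good
  if one point lies at the left margin and one at the right margin, both at height between 1/3
  and 2/3, one point of the column lies below height 1/12 and one between heights 1/4 and 3/10,
  and every other point avoids the margins and these two boxes. Each column is good with
  probability bounded below by a constant, and the two column points then lie below PQ at
  distance at least 1/6. As sorting along horizontal strips of height about 1/sqrt n gives a
  tour of length at most 10 sqrt n, the ratio is at least (number of good columns)/(60 sqrt n)
  pointwise, and its expectation is of order sqrt n.\<close>

section \<open>Noncrossing tours from two monotone chains\<close>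

definition lex_le :: "point \<Rightarrow> point \<Rightarrow> bool" (infix "\<sqsubseteq>" 50) where
  "a \<sqsubseteq> b \<longleftrightarrow> fst a < fst b \<or> fst a = fst b \<and> snd a \<le> snd b"

definition lex_less :: "point \<Rightarrow> point \<Rightarrow> bool" (infix "\<sqsubset>" 50) where
  "a \<sqsubset> b \<longleftrightarrow> fst a < fst b \<or> fst a = fst b \<and> snd a < snd b"

interpretation lex: linorder lex_le lex_less
  by unfold_locales (auto simp: lex_le_def lex_less_def prod_eq_iff)

lemma closed_segment_lex_between:
  assumes "z \<in> closed_segment a b" "a \<sqsubseteq> b"
  shows "a \<sqsubseteq> z \<and> z \<sqsubseteq> b"
proof -
  obtain u where u: "0 \<le> u" "u \<le> 1" "z = (1 - u) *\<^sub>R a + u *\<^sub>R b"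
    using assms(1) by (auto simp: closed_segment_def)
  have fst: "fst z - fst a = u * (fst b - fst a)" "fst b - fst z = (1 - u) * (fst b - fst a)"
    and snd: "snd z - snd a = u * (snd b - snd a)" "snd b - snd z = (1 - u) * (snd b - snd a)"
    unfolding u(3) by (simp_all add: algebra_simps)
  consider "u = 0" | "u = 1" | "0 < u" "u < 1" using u by linarith
  then show ?thesis
  proof cases
    case 3
    have "fst a < fst z \<and> fst z < fst b" if "fst a < fst b"
      using fst 3 that by (metis diff_gt_0_iff_gt mult_pos_pos)
    moreover have "snd a \<le> snd z \<and> snd z \<le> snd b" if "snd a \<le> snd b"
      using snd 3 that by (metis diff_ge_0_iff_ge less_eq_real_def mult_nonneg_nonneg)
    ultimately show ?thesis using assms(2) fst by (auto simp: lex_le_def)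
  qed (use u assms(2) in auto)
qed

lemma closed_segment_lex_extreme:
  assumes "z \<in> closed_segment c d" "z \<sqsubseteq> c \<and> z \<sqsubseteq> d \<or> c \<sqsubseteq> z \<and> d \<sqsubseteq> z"
  shows "z \<in> {c, d}"
  using closed_segment_lex_between[OF assms(1)]
    closed_segment_lex_between[of z d c] assms lex.linear[of c d]
  by (auto simp: closed_segment_commute)

fun path_edges :: "'a list \<Rightarrow> ('a \<times> 'a) set" where
  "path_edges (x # y # zs) = insert (x, y) (path_edges (y # zs))"
| "path_edges _ = {}"

fun path_length :: "'a::metric_space list \<Rightarrow> real" where
  "path_length (x # y # zs) = dist x y + path_length (y # zs)"
| "path_length _ = 0"

lemma path_edges_append: "path_edges (xs @ y # ys) = path_edges (xs @ [y]) \<union> path_edges (y # ys)"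
  by (induction xs rule: path_edges.induct) auto

lemma path_length_append:
  "path_length (xs @ y # ys) = path_length (xs @ [y]) + path_length (y # ys)"
  by (induction xs rule: path_length.induct) auto

lemma path_edges_rev: "path_edges (rev xs) = prod.swap ` path_edges xs"
proof (induction xs rule: path_edges.induct)
  case (1 x y zs)
  have "path_edges (rev (x # y # zs)) = path_edges (rev zs @ [y]) \<union> path_edges [y, x]"
    using path_edges_append[of "rev zs" y "[x]"] by simp
  then show ?case using "1.IH" by auto
qed auto

lemma path_edges_nth: "Suc i < length xs \<Longrightarrow> (xs ! i, xs ! Suc i) \<in> path_edges xs"
  by (induction xs arbitrary: i rule: path_edges.induct) (auto simp: nth_Cons split: nat.split)

lemma path_edges_subset: "(a, b) \<in> path_edges xs \<Longrightarrow> a \<in> set xs \<and> b \<in> set xs"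
  by (induction xs rule: path_edges.induct) auto

lemma path_edges_snoc_fst: "(a, b) \<in> path_edges (xs @ [y]) \<Longrightarrow> a \<in> set xs"
  by (induction xs rule: path_edges.induct) (auto dest: path_edges_subset)

lemma path_length_nonneg: "0 \<le> path_length xs"
  by (induction xs rule: path_length.induct) auto

lemma path_length_Cons_ge: "path_length xs \<le> path_length (x # xs)"
  by (cases xs) auto

lemma path_length_append_ge: "path_length xs \<le> path_length (xs @ ys)"
  by (induction xs rule: path_length.induct) (auto simp: path_length_nonneg)

lemma path_length_conv_sum:
  "path_length xs = (\<Sum>i<length xs - 1. dist (xs ! i) (xs ! Suc i))"
  by (induction xs rule: path_length.induct)
    (simp_all del: sum.lessThan_Suc add: sum.lessThan_Suc_shift)

lemma nth_snoc_hd_Suc: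
  assumes "i < length xs"
  shows "(xs @ [hd xs]) ! Suc i = xs ! (Suc i mod length xs)"
proof -
  have "xs \<noteq> []" using assms by auto
  then show ?thesis
    using assms by (cases "Suc i = length xs") (auto simp: nth_append hd_conv_nth)
qed

lemma tour_length_conv_path_length: "tour_length xs = path_length (xs @ [hd xs])"
  by (simp add: tour_length_def path_length_conv_sum nth_snoc_hd_Suc nth_append_left)

lemma tour_edge_in_path_edges:
  assumes "i < length xs"
  shows "(xs ! i, xs ! (Suc i mod length xs)) \<in> path_edges (xs @ [hd xs])"
  using path_edges_nth[of i "xs @ [hd xs]"] assms by (simp add: nth_snoc_hd_Suc nth_append_left)

lemma noncrossingI:
  assumes "distinct xs"
    and "\<And>a b c d. (a, b) \<in> path_edges (xs @ [hd xs]) \<Longrightarrow> (c, d) \<in> path_edges (xs @ [hd xs]) \<Longrightarrow>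
           (a, b) \<noteq> (c, d) \<Longrightarrow> closed_segment a b \<inter> closed_segment c d \<subseteq> {a, b} \<inter> {c, d}"
  shows "noncrossing xs"
  unfolding noncrossing_def edge_seg_def tour_edge_def
proof (intro allI impI)
  fix i j assume ij: "i < length xs" "j < length xs" "i \<noteq> j"
  then have "xs ! i \<noteq> xs ! j" using assms(1) by (simp add: nth_eq_iff_index_eq)
  then show "closed_segment (xs ! i) (xs ! (Suc i mod length xs)) \<inter>
      closed_segment (xs ! j) (xs ! (Suc j mod length xs))
      \<subseteq> {xs ! i, xs ! (Suc i mod length xs)} \<inter> {xs ! j, xs ! (Suc j mod length xs)}"
    using assms(2) tour_edge_in_path_edges ij by blast
qed

lemma lex_sorted_path_edges_meet:
  assumes "sorted_wrt (\<sqsubset>) zs" "(a, b) \<in> path_edges zs" "(c, d) \<in> path_edges zs" "(a, b) \<noteq> (c, d)"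
  shows "closed_segment a b \<inter> closed_segment c d \<subseteq> {a, b} \<inter> {c, d}"
  using assms
proof (induction zs arbitrary: a b c d rule: path_edges.induct)
  case (1 x y zs)
  have first_edge: "closed_segment x y \<inter> closed_segment c d \<subseteq> {x, y} \<inter> {c, d}"
    if "(c, d) \<in> path_edges (y # zs)" for c d
  proof
    fix z assume z: "z \<in> closed_segment x y \<inter> closed_segment c d"
    have "y \<sqsubseteq> c" "y \<sqsubseteq> d"
      using path_edges_subset[OF that] "1.prems"(1) by (auto intro: lex.less_imp_le)
    moreover have "z \<sqsubseteq> y" using closed_segment_lex_between[of z x y] z "1.prems"(1) by auto
    moreover have "c \<sqsubseteq> z \<or> d \<sqsubseteq> z"
      using closed_segment_lex_between[of z c d] closed_segment_lex_between[of z d c] z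
      by (metis IntD2 closed_segment_commute lex.linear)
    ultimately have "z = y" by auto
    then show "z \<in> {x, y} \<inter> {c, d}"
      using closed_segment_lex_extreme z \<open>y \<sqsubseteq> c\<close> \<open>y \<sqsubseteq> d\<close> by auto
  qed
  from "1.prems"(2-4) consider
      "(a, b) \<in> path_edges (y # zs)" "(c, d) \<in> path_edges (y # zs)"
    | "(a, b) = (x, y)" "(c, d) \<in> path_edges (y # zs)"
    | "(c, d) = (x, y)" "(a, b) \<in> path_edges (y # zs)"
    by auto
  then show ?case
  proof cases
    case 1
    then show ?thesis using "1.IH" "1.prems" by simp
  next
    case 2
    then show ?thesis using first_edge by simp
  next
    case 3
    then show ?thesis using first_edge[of a b] by (auto simp: Int_commute)
  qed
qed auto

definition orient :: "point \<Rightarrow> point \<Rightarrow> point \<Rightarrow> real" where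
  "orient P Q z = (fst Q - fst P) * (snd z - snd P) - (snd Q - snd P) * (fst z - fst P)"

lemma orient_self [simp]: "orient P Q P = 0" "orient P Q Q = 0"
  by (simp_all add: orient_def)

lemma orient_combination:
  "orient P Q ((1 - u) *\<^sub>R a + u *\<^sub>R b) = (1 - u) * orient P Q a + u * orient P Q b"
  by (simp add: orient_def algebra_simps)

lemma orient_neg_below:
  assumes "fst P < fst Q" "fst P \<le> fst z" "fst z \<le> fst Q" "snd z < snd P" "snd z < snd Q"
  shows "orient P Q z < 0"
proof -
  define D where "D = fst Q - fst P"
  define t where "t = fst z - fst P"
  have D: "0 < D" "0 \<le> t" "t \<le> D" using assms(1-3) by (auto simp: D_def t_def)
  have "orient P Q z = (D - t) * (snd z - snd P) + t * (snd z - snd Q)"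
    by (simp add: orient_def D_def t_def algebra_simps)
  also have "\<dots> < 0"
  proof (cases "t = D")
    case True
    then show ?thesis using D assms(5) by (simp add: mult_pos_neg)
  next
    case False
    then have "(D - t) * (snd z - snd P) < 0" using D assms(4) by (simp add: mult_pos_neg)
    moreover have "t * (snd z - snd Q) \<le> 0" using D assms(5) by (simp add: mult_nonneg_nonpos)
    ultimately show ?thesis by linarith
  qed
  finally show ?thesis .
qed

lemma segments_opposite_sides_meet:
  assumes ab: "orient P Q a \<le> 0" "orient P Q b \<le> 0" "orient P Q a < 0 \<or> orient P Q b < 0"
    and cd: "orient P Q c \<ge> 0" "orient P Q d \<ge> 0"
    and z: "z \<in> closed_segment a b" "z \<in> closed_segment c d"
  shows "z \<in> {a, b} \<and> orient P Q z = 0"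
proof -
  obtain u where u: "0 \<le> u" "u \<le> 1" "z = (1 - u) *\<^sub>R a + u *\<^sub>R b"
    using z(1) by (auto simp: closed_segment_def)
  obtain v where v: "0 \<le> v" "v \<le> 1" "z = (1 - v) *\<^sub>R c + v *\<^sub>R d"
    using z(2) by (auto simp: closed_segment_def)
  have ab_terms: "(1 - u) * orient P Q a \<le> 0" "u * orient P Q b \<le> 0"
    using u ab by (simp_all add: mult_nonneg_nonpos)
  have z_ab: "orient P Q z = (1 - u) * orient P Q a + u * orient P Q b"
    unfolding u(3) by (rule orient_combination)
  have z_cd: "orient P Q z = (1 - v) * orient P Q c + v * orient P Q d"
    unfolding v(3) by (rule orient_combination)
  have "0 \<le> (1 - v) * orient P Q c + v * orient P Q d"
    using v cd by simp
  then have z0: "orient P Q z = 0"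
    using ab_terms z_ab z_cd by linarith
  then have "(1 - u) * orient P Q a = 0" "u * orient P Q b = 0"
    using ab_terms z_ab by linarith+
  then have "u = 1 \<or> u = 0" using ab(3) by auto
  then show ?thesis using u(3) z0 by auto
qed

lemma lower_upper_chain_edges_meet:
  assumes upper: "sorted_wrt (\<sqsubset>) (P # us @ [Q])" "\<forall>w\<in>set us. orient P Q w \<ge> 0"
    and lower: "ds \<noteq> []" "\<forall>w\<in>set ds. orient P Q w < 0"
    and edges: "(a, b) \<in> path_edges (P # ds @ [Q])" "(c, d) \<in> path_edges (P # us @ [Q])"
  shows "closed_segment a b \<inter> closed_segment c d \<subseteq> {a, b} \<inter> {c, d}"
proof
  fix z assume z: "z \<in> closed_segment a b \<inter> closed_segment c d"
  obtain d0 ds' where ds: "ds = d0 # ds'" using lower(1) by (cases ds) auto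
  have "a \<in> set ds \<or> b \<in> set ds"
    using edges(1) path_edges_snoc_fst[of a b "d0 # ds'" Q] by (auto simp: ds)
  moreover have ab: "a \<in> set (P # ds @ [Q])" "b \<in> set (P # ds @ [Q])"
    using path_edges_subset[OF edges(1)] by auto
  ultimately have "orient P Q a \<le> 0" "orient P Q b \<le> 0" "orient P Q a < 0 \<or> orient P Q b < 0"
    using lower(2) by (auto simp: less_imp_le)
  moreover have cd: "c \<in> set (P # us @ [Q])" "d \<in> set (P # us @ [Q])"
    using path_edges_subset[OF edges(2)] by auto
  then have "orient P Q c \<ge> 0" "orient P Q d \<ge> 0" using upper(2) by auto
  ultimately have "z \<in> {a, b}" "orient P Q z = 0"
    using segments_opposite_sides_meet z by blast+
  then have "z \<in> {P, Q}" using ab lower(2) by auto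
  moreover have "P \<sqsubseteq> c" "c \<sqsubseteq> Q" "P \<sqsubseteq> d" "d \<sqsubseteq> Q"
    using cd upper(1) by (auto simp: sorted_wrt_append intro: lex.less_imp_le)
  ultimately have "z \<sqsubseteq> c \<and> z \<sqsubseteq> d \<or> c \<sqsubseteq> z \<and> d \<sqsubseteq> z" by auto
  then have "z \<in> {c, d}" using closed_segment_lex_extreme z by blast
  then show "z \<in> {a, b} \<inter> {c, d}" using \<open>z \<in> {a, b}\<close> by blast
qed

lemma noncrossing_two_chains:
  assumes sorted: "sorted_wrt (\<sqsubset>) (P # ds @ [Q])" "sorted_wrt (\<sqsubset>) (P # us @ [Q])"
    and below: "ds \<noteq> []" "\<forall>w\<in>set ds. orient P Q w < 0"
    and above: "\<forall>w\<in>set us. orient P Q w \<ge> 0"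
  shows "distinct (P # ds @ Q # rev us)" "noncrossing (P # ds @ Q # rev us)"
proof -
  show distinct: "distinct (P # ds @ Q # rev us)"
    using sorted below(2) above by (fastforce simp: sorted_wrt_append lex.strict_sorted_iff)
  define lower where "lower = P # ds @ [Q]"
  define upper where "upper = P # us @ [Q]"
  have edges: "path_edges ((P # ds @ Q # rev us) @ [hd (P # ds @ Q # rev us)])
      = path_edges lower \<union> prod.swap ` path_edges upper"
    using path_edges_append[of "P # ds" Q "rev us @ [P]"]
    by (simp add: lower_def upper_def path_edges_rev[of "P # us @ [Q]", simplified])
  note cross = lower_upper_chain_edges_meet[OF sorted(2) above below, folded lower_def upper_def]
  show "noncrossing (P # ds @ Q # rev us)"
  proof (rule noncrossingI[OF distinct, unfolded edges])
    fix a b c d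
    assume "(a, b) \<in> path_edges lower \<union> prod.swap ` path_edges upper"
      "(c, d) \<in> path_edges lower \<union> prod.swap ` path_edges upper" "(a, b) \<noteq> (c, d)"
    then consider
        "(a, b) \<in> path_edges lower" "(c, d) \<in> path_edges lower"
      | "(b, a) \<in> path_edges upper" "(d, c) \<in> path_edges upper"
      | "(a, b) \<in> path_edges lower" "(d, c) \<in> path_edges upper"
      | "(b, a) \<in> path_edges upper" "(c, d) \<in> path_edges lower"
      by auto
    then show "closed_segment a b \<inter> closed_segment c d \<subseteq> {a, b} \<inter> {c, d}"
    proof cases
      case 1
      then show ?thesis
        using lex_sorted_path_edges_meet[OF sorted(1)] \<open>(a, b) \<noteq> (c, d)\<close> by (simp add: lower_def)
    next
      case 2
      then show ?thesis
        using lex_sorted_path_edges_meet[OF sorted(2), of b a d c] \<open>(a, b) \<noteq> (c, d)\<close>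
        by (simp add: upper_def closed_segment_commute insert_commute) blast
    next
      case 3
      then show ?thesis using cross[of a b d c] by (auto simp: closed_segment_commute)
    next
      case 4
      then show ?thesis using cross[of c d b a] by (auto simp: closed_segment_commute)
    qed
  qed
qed

section \<open>Long noncrossing tours and short tours\<close>

lemma finite_tours: "finite X \<Longrightarrow> finite {xs. is_tour X xs \<and> Pr xs}"
  by (rule finite_subset[OF _ finite_lists_length_le[of X "card X"]])
     (auto simp: is_tour_def distinct_card[symmetric])

lemma worst_xopt_length_ge_lower_chain:
  assumes X: "finite X" "P \<in> X" "Q \<in> X" "P \<noteq> Q" "\<forall>w\<in>X. P \<sqsubseteq> w \<and> w \<sqsubseteq> Q"
    and below: "\<exists>w\<in>X. orient P Q w < 0"
  shows "path_length (lex.sorted_list_of_set {w\<in>X. orient P Q w < 0}) \<le> worst_xopt_length X"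
proof -
  define ds where "ds = lex.sorted_list_of_set {w\<in>X. orient P Q w < 0}"
  define us where "us = lex.sorted_list_of_set (X - set ds - {P, Q})"
  define xs where "xs = P # ds @ Q # rev us"
  have ds: "set ds = {w\<in>X. orient P Q w < 0}" "sorted_wrt (\<sqsubset>) ds"
    using X(1) by (simp_all add: ds_def)
  have us: "set us = X - set ds - {P, Q}" "sorted_wrt (\<sqsubset>) us"
    using X(1) by (simp_all add: us_def)
  have strict: "P \<sqsubset> w \<and> w \<sqsubset> Q" if "w \<in> X" "w \<noteq> P" "w \<noteq> Q" for w
    using that X(5) by (auto simp: lex.le_less)
  have "P \<sqsubset> Q" using X(3-5) by (auto simp: lex.le_less)
  moreover have "\<forall>w\<in>set ds. P \<sqsubset> w" "\<forall>w\<in>set ds. w \<sqsubset> Q"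
    using strict ds(1) by fastforce+
  moreover have "\<forall>w\<in>set us. P \<sqsubset> w" "\<forall>w\<in>set us. w \<sqsubset> Q"
    using strict us(1) by blast+
  ultimately have sorted: "sorted_wrt (\<sqsubset>) (P # ds @ [Q])" "sorted_wrt (\<sqsubset>) (P # us @ [Q])"
    using ds(2) us(2) by (simp_all add: sorted_wrt_append)
  have "ds \<noteq> []" "\<forall>w\<in>set ds. orient P Q w < 0" "\<forall>w\<in>set us. orient P Q w \<ge> 0"
    using below ds(1) us(1) by (auto simp: not_less[symmetric])
  note chains = noncrossing_two_chains[OF sorted this]
  have "set xs = X" using ds(1) us(1) X(2,3) unfolding xs_def by auto
  moreover have "length xs \<ge> 3" using \<open>ds \<noteq> []\<close> by (cases ds) (simp_all add: xs_def)
  ultimately have "is_tour X xs" using chains(1) by (simp add: is_tour_def xs_def)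
  have "path_length ds \<le> path_length (P # ds @ [Q])"
    using path_length_append_ge[of ds "[Q]"] path_length_Cons_ge[of "ds @ [Q]" P] by simp
  also have "\<dots> \<le> path_length (xs @ [hd xs])"
    using path_length_append_ge[of "P # ds @ [Q]" "rev us @ [P]"] by (simp add: xs_def)
  also have "\<dots> = tour_length xs" by (simp add: tour_length_conv_path_length)
  also have "\<dots> \<le> worst_xopt_length X"
    unfolding worst_xopt_length_def
    by (rule Max_ge) (use finite_tours[OF X(1)] \<open>is_tour X xs\<close> chains(2) in \<open>auto simp: xs_def\<close>)
  finally show ?thesis by (simp add: ds_def)
qed

lemma dist_le_path_sum:
  assumes "l \<le> h" "h < length zs"
  shows "dist (zs ! l) (zs ! h) \<le> (\<Sum>t\<in>{l..<h}. dist (zs ! t) (zs ! Suc t))"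
  using assms
proof (induction h rule: dec_induct)
  case (step h)
  have "dist (zs ! l) (zs ! Suc h) \<le> dist (zs ! l) (zs ! h) + dist (zs ! h) (zs ! Suc h)"
    by (rule dist_triangle)
  also have "\<dots> \<le> (\<Sum>t\<in>{l..<Suc h}. dist (zs ! t) (zs ! Suc t))"
    using step by simp
  finally show ?case .
qed simp

lemma path_length_ge_columns:
  fixes zs :: "'a::metric_space list" and f :: "'a \<Rightarrow> real" and I :: "'k \<Rightarrow> real set"
  assumes sorted: "sorted (map f zs)" and K: "finite K" "disjoint_family_on I K"
    and intervals: "\<And>k. k \<in> K \<Longrightarrow> is_interval (I k)"
    and ab: "\<And>k. k \<in> K \<Longrightarrow>
      a k \<in> set zs \<and> b k \<in> set zs \<and> f (a k) \<in> I k \<and> f (b k) \<in> I k \<and> \<delta> \<le> dist (a k) (b k)"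
  shows "\<delta> * card K \<le> path_length zs"
proof -
  have "\<exists>l h. l \<le> h \<and> h < length zs \<and> {zs ! l, zs ! h} = {a k, b k}" if k: "k \<in> K" for k
  proof -
    obtain i j where "i < length zs" "j < length zs" "zs ! i = a k" "zs ! j = b k"
      using ab[OF k] by (auto simp: in_set_conv_nth)
    then show ?thesis
      by (intro exI[of _ "min i j"] exI[of _ "max i j"]) (auto simp: min_def max_def)
  qed
  then obtain l h where lh: "\<And>k. k \<in> K \<Longrightarrow> l k \<le> h k \<and> h k < length zs \<and> {zs ! l k, zs ! h k} = {a k, b k}"
    by metis
  define g where "g t = dist (zs ! t) (zs ! Suc t)" for t
  define R where "R k = {l k..<h k}" for k
  have "\<delta> \<le> sum g (R k)" if "k \<in> K" for k
  proof -
    have "\<delta> \<le> dist (zs ! l k) (zs ! h k)"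
      using ab[OF that] lh[OF that] by (auto simp: doubleton_eq_iff dist_commute)
    also have "\<dots> \<le> sum g (R k)"
      using dist_le_path_sum[of "l k" "h k" zs] lh[OF that] by (simp add: R_def g_def)
    finally show ?thesis .
  qed
  then have "\<delta> * card K \<le> (\<Sum>k\<in>K. sum g (R k))"
    using sum_mono[of K "\<lambda>_. \<delta>"] by (simp add: mult.commute)
  also have "\<dots> = sum g (\<Union>k\<in>K. R k)"
  proof (rule sum.UNION_disjoint[symmetric])
    have "f (zs ! t) \<in> I k" if "k \<in> K" "t \<in> R k" for k t
    proof -
      have ends: "f (zs ! l k) \<in> I k" "f (zs ! h k) \<in> I k"
        using ab[OF that(1)] lh[OF that(1)] by (auto simp: doubleton_eq_iff)
      have "f (zs ! l k) \<le> f (zs ! t)" "f (zs ! t) \<le> f (zs ! h k)"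
        using sorted_nth_mono[OF sorted, of "l k" t] sorted_nth_mono[OF sorted, of t "h k"]
          that(2) lh[OF that(1)] by (auto simp: R_def)
      then show ?thesis using intervals[OF that(1)] ends unfolding is_interval_1 by blast
    qed
    then show "\<forall>k\<in>K. \<forall>k'\<in>K. k \<noteq> k' \<longrightarrow> R k \<inter> R k' = {}"
      using K(2) unfolding disjoint_family_on_def by (metis disjoint_iff)
  qed (use K(1) in \<open>auto simp: R_def\<close>)
  also have "\<dots> \<le> sum g {..<length zs - 1}"
    using lh by (intro sum_mono2) (fastforce simp: R_def g_def)+
  finally show ?thesis by (simp add: path_length_conv_sum g_def)
qed

lemma lex_sorted_imp_sorted_fst: "sorted_wrt (\<sqsubset>) zs \<Longrightarrow> sorted (map fst zs)"
  by (induction zs) (auto simp: lex_less_def less_imp_le)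

lemma worst_xopt_length_ge_columns:
  fixes I :: "'k \<Rightarrow> real set"
  assumes X: "finite X" "P \<in> X" "Q \<in> X" "P \<noteq> Q" "\<forall>w\<in>X. P \<sqsubseteq> w \<and> w \<sqsubseteq> Q"
    and K: "finite K" "K \<noteq> {}" "disjoint_family_on I K" "\<And>k. k \<in> K \<Longrightarrow> is_interval (I k)"
    and ab: "\<And>k. k \<in> K \<Longrightarrow> a k \<in> X \<and> b k \<in> X \<and> orient P Q (a k) < 0 \<and> orient P Q (b k) < 0 \<and>
                fst (a k) \<in> I k \<and> fst (b k) \<in> I k \<and> \<delta> \<le> dist (a k) (b k)"
  shows "\<delta> * card K \<le> worst_xopt_length X"
proof -
  define ds where "ds = lex.sorted_list_of_set {w\<in>X. orient P Q w < 0}"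
  have set_ds: "set ds = {w\<in>X. orient P Q w < 0}" using X(1) by (simp add: ds_def)
  have "sorted (map fst ds)"
    using lex_sorted_imp_sorted_fst lex.strict_sorted_list_of_set by (simp add: ds_def)
  moreover have "a k \<in> set ds \<and> b k \<in> set ds \<and> fst (a k) \<in> I k \<and> fst (b k) \<in> I k \<and>
      \<delta> \<le> dist (a k) (b k)" if "k \<in> K" for k
    using ab[OF that] by (simp add: set_ds)
  ultimately have "\<delta> * card K \<le> path_length ds"
    using K(1,3,4) by (intro path_length_ge_columns[where f = fst and I = I and a = a and b = b]) auto
  also have "\<dots> \<le> worst_xopt_length X"
    unfolding ds_def using ab K(2) by (intro worst_xopt_length_ge_lower_chain[OF X]) blast
  finally show ?thesis .
qed

lemma path_length_snoc: "xs \<noteq> [] \<Longrightarrow> path_length (xs @ [y]) = path_length xs + dist (last xs) y"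
  by (cases xs rule: rev_cases) (simp_all add: path_length_append[of _ _ "[y]"])

lemma path_length_le_key_increase:
  fixes zs :: "'a::metric_space list" and f :: "'a \<Rightarrow> real" and e :: real
  assumes "sorted (map f zs)" "zs \<noteq> []"
    and "\<And>a b. a \<in> set zs \<Longrightarrow> b \<in> set zs \<Longrightarrow> f a \<le> f b \<Longrightarrow> dist a b \<le> f b - f a + e"
  shows "path_length zs \<le> f (last zs) - f (hd zs) + (length zs - 1) * e"
  using assms
proof (induction zs rule: path_length.induct)
  case (1 x y zs)
  have "dist x y \<le> f y - f x + e" using "1.prems" by simp
  moreover have "path_length (y # zs) \<le> f (last (y # zs)) - f y + length zs * e"
    using "1.IH" "1.prems" by simp
  ultimately show ?case by (cases zs) (simp_all add: algebra_simps)
qed auto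

lemma in_unit_square: "z \<in> unit_square \<longleftrightarrow> 0 \<le> fst z \<and> fst z \<le> 1 \<and> 0 \<le> snd z \<and> snd z \<le> 1"
  by (cases z) (simp add: unit_square_def cbox_Pair_eq)

lemma dist_le_abs_fst_snd: "dist a b \<le> \<bar>fst a - fst b\<bar> + \<bar>snd a - snd b\<bar>"
  by (cases a; cases b) (simp add: dist_Pair_Pair dist_real_def sqrt_sum_squares_le_sum_abs)

lemma dist_le_2_unit_square:
  assumes "a \<in> unit_square" "b \<in> unit_square"
  shows "dist a b \<le> 2"
proof -
  have "\<bar>fst a - fst b\<bar> \<le> 1" "\<bar>snd a - snd b\<bar> \<le> 1"
    using assms by (auto simp: in_unit_square abs_le_iff)
  then show ?thesis using dist_le_abs_fst_snd[of a b] by linarith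
qed

text \<open>Sorting by this key visits the horizontal strips of height 1/k one after another,
  each from left to right. The factor 3 makes the key grow by at least 2 whenever the
  strip changes, which pays for the jump between strips.\<close>
definition strip_key :: "nat \<Rightarrow> point \<Rightarrow> real" where
  "strip_key k z = 3 * of_int \<lfloor>real k * snd z\<rfloor> + fst z"

lemma dist_le_strip_key_diff:
  assumes k: "k \<ge> 1" and a: "a \<in> unit_square" and b: "b \<in> unit_square"
    and le: "strip_key k a \<le> strip_key k b"
  shows "dist a b \<le> strip_key k b - strip_key k a + 1 / real k"
proof -
  define sa where "sa = \<lfloor>real k * snd a\<rfloor>"
  define sb where "sb = \<lfloor>real k * snd b\<rfloor>"
  have ua: "0 \<le> fst a" "fst a \<le> 1" "0 \<le> snd a" "snd a \<le> 1"
    and ub: "0 \<le> fst b" "fst b \<le> 1" "0 \<le> snd b" "snd b \<le> 1"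
    using a b by (auto simp: in_unit_square)
  have d: "dist a b \<le> \<bar>fst a - fst b\<bar> + \<bar>snd a - snd b\<bar>" by (rule dist_le_abs_fst_snd)
  have key: "strip_key k a = 3 * real_of_int sa + fst a" "strip_key k b = 3 * real_of_int sb + fst b"
    by (simp_all add: strip_key_def sa_def sb_def)
  consider "sa = sb" | "sa < sb" | "sb < sa" by linarith
  then show ?thesis
  proof cases
    case 1
    have "real_of_int sa \<le> real k * snd a" "real k * snd a < real_of_int sa + 1"
      and "real_of_int sb \<le> real k * snd b" "real k * snd b < real_of_int sb + 1"
      unfolding sa_def sb_def by linarith+
    then have "\<bar>real k * snd a - real k * snd b\<bar> < 1" using 1 by linarith
    then have "real k * \<bar>snd a - snd b\<bar> < 1" by (simp add: abs_mult flip: right_diff_distrib)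
    then have "\<bar>snd a - snd b\<bar> < 1 / real k" using k by (simp add: field_simps)
    moreover have "fst a \<le> fst b" using le key 1 by simp
    ultimately show ?thesis using d key 1 by simp
  next
    case 2
    then have "real_of_int sa + 1 \<le> real_of_int sb" by linarith
    then have "strip_key k b - strip_key k a \<ge> 2" using key ua ub by linarith
    moreover have "dist a b \<le> 2" using a b by (rule dist_le_2_unit_square)
    moreover have "0 \<le> 1 / real k" by simp
    ultimately show ?thesis by linarith
  next
    case 3
    then have "real_of_int sb + 1 \<le> real_of_int sa" by linarith
    then have "strip_key k a - strip_key k b \<ge> 2" using key ua ub by linarith
    then show ?thesis using le by linarith
  qed
qed

lemma strip_key_bounds:
  assumes "z \<in> unit_square"
  shows "0 \<le> strip_key k z" "strip_key k z \<le> 3 * real k + 1"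
proof -
  have u: "0 \<le> fst z" "fst z \<le> 1" "0 \<le> snd z" "snd z \<le> 1" using assms by (auto simp: in_unit_square)
  then have "0 \<le> real k * snd z" "real k * snd z \<le> real k" by (simp_all add: mult_left_le)
  then have "0 \<le> \<lfloor>real k * snd z\<rfloor>" "\<lfloor>real k * snd z\<rfloor> \<le> real k" by linarith+
  then show "0 \<le> strip_key k z" "strip_key k z \<le> 3 * real k + 1"
    using u by (simp_all add: strip_key_def)
qed

lemma path_length_strip_sorted_le:
  assumes k: "k \<ge> 1" and zs: "zs \<noteq> []" "set zs \<subseteq> unit_square" "sorted (map (strip_key k) zs)"
  shows "path_length zs \<le> 3 * real k + 1 + (length zs - 1) / k"
proof -
  have in_square: "\<And>z. z \<in> set zs \<Longrightarrow> z \<in> unit_square" using zs(2) by auto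
  have "path_length zs \<le> strip_key k (last zs) - strip_key k (hd zs) + (length zs - 1) * (1 / k)"
    by (rule path_length_le_key_increase[where f = "strip_key k", OF zs(3,1)])
       (use dist_le_strip_key_diff[OF k in_square in_square] in blast)
  moreover have "hd zs \<in> unit_square" "last zs \<in> unit_square" using zs(1,2) by auto
  then have "strip_key k (last zs) - strip_key k (hd zs) \<le> 3 * real k + 1"
    using strip_key_bounds[of "hd zs" k] strip_key_bounds[of "last zs" k] by linarith
  ultimately show ?thesis by simp
qed

lemma opt_length_le_sqrt_card:
  assumes X: "finite X" "X \<subseteq> unit_square" "card X \<ge> 3"
  shows "opt_length X \<le> 10 * sqrt (card X)"
proof -
  define n where "n = card X"
  define k where "k = nat \<lceil>sqrt n\<rceil>"
  have sqrt_n: "1 \<le> sqrt n" using X(3) by (simp add: n_def)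
  have k: "sqrt n \<le> k" "k \<le> sqrt n + 1" "k \<ge> 1" unfolding k_def using sqrt_n by linarith+
  define xs where "xs = sort_key (strip_key k) (lex.sorted_list_of_set X)"
  have xs: "distinct xs" "set xs = X" "length xs = n" "sorted (map (strip_key k) xs)"
    using X(1) by (simp_all add: xs_def n_def distinct_card[symmetric])
  then have "xs \<noteq> []" "is_tour X xs" using X(3) by (auto simp: is_tour_def n_def)
  have "real (n - 1) \<le> sqrt n * sqrt n" by simp
  also have "\<dots> \<le> sqrt n * k" using k by (intro mult_left_mono) auto
  finally have "(n - 1) / k \<le> sqrt n" using k(3) by (simp add: field_simps)
  then have "path_length xs \<le> 3 * real k + 1 + sqrt n"
    using path_length_strip_sorted_le[OF k(3) \<open>xs \<noteq> []\<close> _ xs(4)] xs(2,3) X(2) by fastforce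
  moreover have "dist (last xs) (hd xs) \<le> 2"
    using \<open>xs \<noteq> []\<close> xs(2) X(2) by (intro dist_le_2_unit_square) auto
  moreover have "tour_length xs = path_length xs + dist (last xs) (hd xs)"
    using \<open>xs \<noteq> []\<close> by (simp add: tour_length_conv_path_length path_length_snoc)
  moreover have "opt_length X \<le> tour_length xs"
    unfolding opt_length_def using finite_tours[of X "\<lambda>_. True"] X(1) \<open>is_tour X xs\<close>
    by (auto intro!: Min_le)
  ultimately show ?thesis using k sqrt_n unfolding n_def by linarith
qed

lemma tour_length_pos:
  assumes "is_tour X xs"
  shows "0 < tour_length xs"
proof -
  have xs: "distinct xs" "length xs \<ge> 3" using assms by (auto simp: is_tour_def)
  then have "xs ! 0 \<noteq> xs ! 1" by (subst nth_eq_iff_index_eq) auto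
  then have "0 < dist (xs ! 0) (xs ! (Suc 0 mod length xs))" using xs by simp
  also have "\<dots> \<le> tour_length xs"
    unfolding tour_length_def
    by (rule member_le_sum[where f = "\<lambda>i. dist (xs ! i) (xs ! (Suc i mod length xs))"]) (use xs in auto)
  finally show ?thesis .
qed

lemma opt_length_pos:
  assumes "finite X" "card X \<ge> 3"
  shows "0 < opt_length X"
proof -
  have "is_tour X (lex.sorted_list_of_set X)"
    using assms distinct_card[of "lex.sorted_list_of_set X"] by (simp add: is_tour_def)
  then show ?thesis
    unfolding opt_length_def using finite_tours[of X "\<lambda>_. True"] assms(1) tour_length_pos
    by (subst Min_gr_iff) auto
qed

section \<open>Good columns of a random instance\<close>

abbreviation square_measure :: "point measure" where
  "square_measure \<equiv> uniform_measure lborel unit_square"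

lemma unit_square_Times: "unit_square = {0..1} \<times> {0..1}"
  by (simp add: unit_square_def cbox_Pair_eq)

lemma Times_in_sets_borel:
  fixes A B :: "real set"
  assumes "A \<in> sets borel" "B \<in> sets borel"
  shows "A \<times> B \<in> sets borel"
  using pair_measureI[OF assms] unfolding borel_prod .

lemma unit_square_in_sets_borel: "unit_square \<in> sets borel"
  by (simp add: unit_square_def)

lemma emeasure_lborel_unit_square: "emeasure lborel unit_square = 1"
  by (simp add: unit_square_def emeasure_lborel_cbox_eq Basis_prod_def inner_prod_def)

lemma prob_space_square_measure: "prob_space square_measure"
  by (rule prob_space_uniform_measure)
    (simp_all add: emeasure_lborel_unit_square unit_square_in_sets_borel)

lemma emeasure_square_measure_Times:
  fixes A B :: "real set"
  assumes "A \<times> B \<subseteq> unit_square" "A \<in> sets borel" "B \<in> sets borel"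
  shows "emeasure square_measure (A \<times> B) = emeasure lborel A * emeasure lborel B"
proof -
  have "emeasure square_measure (A \<times> B) = emeasure lborel (A \<times> B)"
    using assms Times_in_sets_borel[OF assms(2,3)]
    by (simp add: emeasure_lborel_unit_square Int_absorb1 unit_square_in_sets_borel
        divide_ennreal_def)
  also have "\<dots> = emeasure lborel A * emeasure lborel B"
    using lborel.emeasure_pair_measure_Times[of A lborel B] assms(2,3) unfolding lborel_prod by simp
  finally show ?thesis .
qed

definition margin :: "nat \<Rightarrow> real" where
  "margin n = 1 / (8 * real n)"

definition column_range :: "nat \<Rightarrow> nat \<Rightarrow> real set" where
  "column_range n k = {real k / real n .. (real k + 1/2) / real n}"

definition left_box :: "nat \<Rightarrow> point set" where
  "left_box n = {0 .. margin n} \<times> {1/3 .. 2/3}"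

definition right_box :: "nat \<Rightarrow> point set" where
  "right_box n = {1 - margin n .. 1} \<times> {1/3 .. 2/3}"

definition low_box :: "nat \<Rightarrow> nat \<Rightarrow> point set" where
  "low_box n k = column_range n k \<times> {0 .. 1/12}"

definition mid_box :: "nat \<Rightarrow> nat \<Rightarrow> point set" where
  "mid_box n k = column_range n k \<times> {1/4 .. 3/10}"

definition rest_region :: "nat \<Rightarrow> nat \<Rightarrow> point set" where
  "rest_region n k = ({margin n <..< 1 - margin n} - column_range n k) \<times> {0 .. 1}"

lemma margin_bounds: "n > 0 \<Longrightarrow> 0 < margin n \<and> margin n \<le> 1/8"
  by (simp add: margin_def field_simps)

lemma column_range_inside_margins:
  assumes "n \<ge> 8" "1 \<le> k" "k \<le> n - 2"
  shows "column_range n k \<subseteq> {margin n <..< 1 - margin n}"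
proof -
  have n: "real n \<ge> 8" and k: "1 \<le> real k" "real k \<le> real n - 2" using assms by auto
  have "margin n < real k / real n" using n k by (simp add: margin_def field_simps)
  moreover have "(real k + 1/2) / real n \<le> (real n - 3/2) / real n"
    using n k by (intro divide_right_mono) auto
  moreover have "(real n - 3/2) / real n < 1 - margin n"
    using n by (simp add: margin_def field_simps)
  ultimately show ?thesis by (auto simp: column_range_def)
qed

lemma disjoint_family_column_range:
  assumes "n > 0"
  shows "disjoint_family (column_range n)"
proof -
  have separated: "column_range n k \<inter> column_range n k' = {}" if "k < k'" for k k'
  proof -
    have "real k + 1/2 < real k'" using that by linarith
    then have "(real k + 1/2) / real n < real k' / real n"
      using assms by (simp add: divide_strict_right_mono)
    then show ?thesis by (auto simp: column_range_def)
  qed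
  show ?thesis
    unfolding disjoint_family_on_def
    by (metis Int_commute linorder_neqE_nat separated)
qed

lemma emeasure_square_measure_box:
  assumes "0 \<le> a1" "a1 \<le> b1" "b1 \<le> 1" "0 \<le> a2" "a2 \<le> b2" "b2 \<le> 1"
  shows "emeasure square_measure ({a1..b1} \<times> {a2..b2}) = (b1 - a1) * (b2 - a2)"
  using assms by (subst emeasure_square_measure_Times) (auto simp: unit_square_Times ennreal_mult)

lemma emeasure_square_measure_regions:
  assumes "n \<ge> 8" "1 \<le> k" "k \<le> n - 2"
  shows "emeasure square_measure (left_box n) = 1 / (24 * real n)"
    "emeasure square_measure (right_box n) = 1 / (24 * real n)"
    "emeasure square_measure (low_box n k) = 1 / (24 * real n)"
    "emeasure square_measure (mid_box n k) = 1 / (40 * real n)"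
    "emeasure square_measure (rest_region n k) = 1 - 3 / (4 * real n)"
proof -
  have n: "real n \<ge> 8" using assms by simp
  have m: "0 < margin n" "margin n < 1/2" using margin_bounds[of n] n by auto
  have col: "column_range n k \<subseteq> {margin n <..< 1 - margin n}"
    by (rule column_range_inside_margins[OF assms])
  have nonempty: "real k / real n \<le> (real k + 1/2) / real n"
    using n by (simp add: divide_right_mono)
  then have "real k / real n \<in> column_range n k" "(real k + 1/2) / real n \<in> column_range n k"
    by (auto simp: column_range_def)
  then have col_ends: "0 \<le> real k / real n" "real k / real n \<le> (real k + 1/2) / real n"
    "(real k + 1/2) / real n \<le> 1"
    using col m nonempty by auto
  show "emeasure square_measure (left_box n) = 1 / (24 * real n)"
    "emeasure square_measure (right_box n) = 1 / (24 * real n)"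
    using m unfolding left_box_def right_box_def
    by (subst emeasure_square_measure_box; simp add: margin_def field_simps)+
  show "emeasure square_measure (low_box n k) = 1 / (24 * real n)"
    "emeasure square_measure (mid_box n k) = 1 / (40 * real n)"
    using col_ends n unfolding low_box_def mid_box_def column_range_def
    by (subst emeasure_square_measure_box; simp add: field_simps)+
  have "emeasure lborel ({margin n <..< 1 - margin n} - column_range n k)
      = ennreal (1 - 2 * margin n) - ennreal (1 / (2 * real n))"
    using col col_ends m n
    by (subst emeasure_Diff) (auto simp: column_range_def field_simps)
  also have "\<dots> = ennreal (1 - 3 / (4 * real n))"
    using n by (subst ennreal_minus) (auto simp: margin_def field_simps)
  finally show "emeasure square_measure (rest_region n k) = 1 - 3 / (4 * real n)"
    using m col unfolding rest_region_def
    by (subst emeasure_square_measure_Times) (auto simp: unit_square_Times column_range_def)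
qed

definition tuples :: "nat \<Rightarrow> nat list set" where
  "tuples n = {\<tau>. length \<tau> = 4 \<and> distinct \<tau> \<and> set \<tau> \<subseteq> {..<n}}"

definition region :: "nat \<Rightarrow> nat \<Rightarrow> nat list \<Rightarrow> nat \<Rightarrow> point set" where
  "region n k \<tau> i =
     (if i = \<tau> ! 0 then left_box n else if i = \<tau> ! 1 then right_box n
      else if i = \<tau> ! 2 then low_box n k else if i = \<tau> ! 3 then mid_box n k else rest_region n k)"

definition config :: "nat \<Rightarrow> nat \<Rightarrow> nat list \<Rightarrow> (nat \<Rightarrow> point) set" where
  "config n k \<tau> = Pi\<^sub>E {..<n} (region n k \<tau>)"

text \<open>The points outside the four boxes are required to avoid the boxes and the margins, so
  the four indices of a good column are determined by the configuration and the union below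
  is disjoint.\<close>
definition good_column :: "nat \<Rightarrow> nat \<Rightarrow> (nat \<Rightarrow> point) set" where
  "good_column n k = (\<Union>\<tau>\<in>tuples n. config n k \<tau>)"

lemma tuplesE:
  assumes "\<tau> \<in> tuples n"
  obtains a b c d where "\<tau> = [a, b, c, d]" "distinct [a, b, c, d]" "a < n" "b < n" "c < n" "d < n"
proof -
  obtain a b c d where "\<tau> = [a, b, c, d]"
    using assms by (auto simp: tuples_def numeral_eq_Suc length_Suc_conv)
  with assms that show ?thesis by (simp add: tuples_def)
qed

lemma regions_subset_unit_square:
  assumes "n \<ge> 8" "1 \<le> k" "k \<le> n - 2"
  shows "region n k \<tau> i \<subseteq> unit_square"
proof -
  have "margin n < 1/2" "0 < margin n" using margin_bounds[of n] assms by auto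
  then have inner: "{margin n <..< 1 - margin n} \<subseteq> {0..1}" by auto
  then have "column_range n k \<subseteq> {0..1}"
    using column_range_inside_margins[OF assms] by (rule subset_trans[rotated])
  with inner \<open>margin n < 1/2\<close> \<open>0 < margin n\<close> show ?thesis
    by (auto simp: region_def left_box_def right_box_def low_box_def mid_box_def rest_region_def
        unit_square_Times)
qed

lemma config_geometry:
  assumes k: "n \<ge> 8" "1 \<le> k" "k \<le> n - 2"
    and \<tau>: "[a, b, c, d] \<in> tuples n" and p: "p \<in> config n k [a, b, c, d]"
  shows "p a \<in> left_box n" "p b \<in> right_box n" "p c \<in> low_box n k" "p d \<in> mid_box n k"
    and "p ` {..<n} \<subseteq> unit_square"
    and "\<forall>w\<in>p ` {..<n}. p a \<sqsubseteq> w \<and> w \<sqsubseteq> p b"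
proof -
  have distinct: "distinct [a, b, c, d]" and lt: "a < n" "b < n" "c < n" "d < n"
    using \<tau> by (auto simp: tuples_def)
  have p_region: "p i \<in> region n k [a, b, c, d] i" if "i < n" for i
    using p that by (auto simp: config_def)
  show "p a \<in> left_box n" "p b \<in> right_box n" "p c \<in> low_box n k" "p d \<in> mid_box n k"
    using p_region[OF lt(1)] p_region[OF lt(2)] p_region[OF lt(3)] p_region[OF lt(4)] distinct
    by (auto simp: region_def)
  show "p ` {..<n} \<subseteq> unit_square"
    using p_region regions_subset_unit_square[OF k] by blast
  have m: "margin n < 1 - margin n" using margin_bounds[of n] k by auto
  have inner: "margin n < fst (p i) \<and> fst (p i) < 1 - margin n" if "i < n" "i \<noteq> a" "i \<noteq> b" for i
    using p_region[OF that(1)] that column_range_inside_margins[OF k]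
    by (auto simp: region_def low_box_def mid_box_def rest_region_def split: if_splits)
  have "fst (p a) \<le> margin n" "1 - margin n \<le> fst (p b)"
    using \<open>p a \<in> left_box n\<close> \<open>p b \<in> right_box n\<close> by (auto simp: left_box_def right_box_def)
  then have "p a \<sqsubseteq> p i \<and> p i \<sqsubseteq> p b" if "i < n" for i
    using inner[OF that] m by (cases "i = a"; cases "i = b") (auto simp: lex_le_def)
  then show "\<forall>w\<in>p ` {..<n}. p a \<sqsubseteq> w \<and> w \<sqsubseteq> p b" by blast
qed

lemma orient_column_boxes_neg:
  assumes k: "n \<ge> 8" "1 \<le> k" "k \<le> n - 2"
    and "P \<in> left_box n" "Q \<in> right_box n" "z \<in> low_box n k \<union> mid_box n k"
  shows "orient P Q z < 0"
proof (rule orient_neg_below)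
  have "fst z \<in> column_range n k" "snd z \<le> 3/10"
    using assms(6) by (auto simp: low_box_def mid_box_def)
  then have "margin n < fst z" "fst z < 1 - margin n"
    using column_range_inside_margins[OF k] by auto
  then show "fst P \<le> fst z" "fst z \<le> fst Q" "fst P < fst Q"
    using assms(4,5) by (auto simp: left_box_def right_box_def)
  show "snd z < snd P" "snd z < snd Q"
    using assms(4,5) \<open>snd z \<le> 3/10\<close> by (auto simp: left_box_def right_box_def)
qed

lemma dist_low_mid_box:
  assumes "z \<in> low_box n k" "w \<in> mid_box n k"
  shows "1/6 \<le> dist z w"
proof -
  have "1/6 \<le> \<bar>snd z - snd w\<bar>" using assms by (auto simp: low_box_def mid_box_def)
  also have "\<dots> \<le> dist z w" using dist_snd_le[of z w] by (simp add: dist_real_def)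
  finally show ?thesis .
qed

lemma good_columnE:
  assumes k: "n \<ge> 8" "1 \<le> k" "k \<le> n - 2" and "p \<in> good_column n k"
  obtains a b c d where "a < n" "b < n" "c < n" "d < n"
    "p a \<in> left_box n" "p b \<in> right_box n" "p c \<in> low_box n k" "p d \<in> mid_box n k"
    "p ` {..<n} \<subseteq> unit_square" "\<forall>w\<in>p ` {..<n}. p a \<sqsubseteq> w \<and> w \<sqsubseteq> p b"
proof -
  obtain \<tau> where \<tau>: "\<tau> \<in> tuples n" "p \<in> config n k \<tau>"
    using assms(4) by (auto simp: good_column_def)
  from \<tau>(1) obtain a b c d where "\<tau> = [a, b, c, d]" "a < n" "b < n" "c < n" "d < n"
    by (rule tuplesE)
  with \<tau> show ?thesis using that config_geometry[OF k, of a b c d p] by simp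
qed

lemma worst_xopt_length_ge_good_columns:
  assumes n: "n \<ge> 8" and K: "K \<subseteq> {1..n - 2}" "K \<noteq> {}" "\<And>k. k \<in> K \<Longrightarrow> p \<in> good_column n k"
  shows "card K / 6 \<le> worst_xopt_length (p ` {..<n})"
proof -
  define X where "X = p ` {..<n}"
  have k: "n \<ge> 8" "1 \<le> k" "k \<le> n - 2" if "k \<in> K" for k
    using n K(1) that by auto
  obtain k0 where k0: "k0 \<in> K" using K(2) by blast
  obtain a b where ab: "a < n" "b < n" "p a \<in> left_box n" "p b \<in> right_box n"
    "\<forall>w\<in>X. p a \<sqsubseteq> w \<and> w \<sqsubseteq> p b"
    using good_columnE[OF k[OF k0] K(3)[OF k0]] unfolding X_def by metis
  have "p a \<noteq> p b"
    using ab(3,4) margin_bounds[of n] n by (auto simp: left_box_def right_box_def)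
  have "\<exists>z w. z \<in> X \<and> w \<in> X \<and> z \<in> low_box n k \<and> w \<in> mid_box n k" if "k \<in> K" for k
    using good_columnE[OF k[OF that] K(3)[OF that]] unfolding X_def by (metis imageI lessThan_iff)
  then obtain z w where zw: "\<And>k. k \<in> K \<Longrightarrow> z k \<in> X \<and> w k \<in> X \<and> z k \<in> low_box n k \<and> w k \<in> mid_box n k"
    by metis
  have "1/6 * card K \<le> worst_xopt_length X"
  proof (rule worst_xopt_length_ge_columns[where I = "column_range n" and a = z and b = w])
    show "finite X" "p a \<in> X" "p b \<in> X" "p a \<noteq> p b" "\<forall>w\<in>X. p a \<sqsubseteq> w \<and> w \<sqsubseteq> p b"
      using ab \<open>p a \<noteq> p b\<close> by (auto simp: X_def)
    show "finite K" "K \<noteq> {}" using K(1,2) finite_subset by auto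
    show "disjoint_family_on (column_range n) K"
      using disjoint_family_column_range[of n] n by (auto intro: disjoint_family_on_mono)
    show "is_interval (column_range n k)" for k by (simp add: column_range_def is_interval_cc)
    fix k assume "k \<in> K"
    note zw_k = zw[OF this] and k_k = k[OF this]
    have "orient (p a) (p b) (z k) < 0" "orient (p a) (p b) (w k) < 0"
      using orient_column_boxes_neg[OF k_k ab(3,4)] zw_k by blast+
    moreover have "1/6 \<le> dist (z k) (w k)" using dist_low_mid_box zw_k by blast
    moreover have "fst (z k) \<in> column_range n k" "fst (w k) \<in> column_range n k"
      using zw_k by (auto simp: low_box_def mid_box_def)
    ultimately show "z k \<in> X \<and> w k \<in> X \<and> orient (p a) (p b) (z k) < 0 \<and> orient (p a) (p b) (w k) < 0 \<and>
        fst (z k) \<in> column_range n k \<and> fst (w k) \<in> column_range n k \<and> 1/6 \<le> dist (z k) (w k)"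
      using zw_k by blast
  qed
  then show ?thesis by (simp add: X_def)
qed

lemma ratio_ge_card_good_columns:
  assumes n: "n \<ge> 8" and K: "K \<subseteq> {1..n - 2}" "K \<noteq> {}" "\<And>k. k \<in> K \<Longrightarrow> p \<in> good_column n k"
  shows "card K / (60 * sqrt n) \<le> worst_xopt_length (p ` {..<n}) / opt_length (p ` {..<n})"
proof -
  define X where "X = p ` {..<n}"
  obtain k where k: "k \<in> K" using K(2) by blast
  then have "n \<ge> 8" "1 \<le> k" "k \<le> n - 2" using n K(1) by auto
  from good_columnE[OF this K(3)[OF k]] obtain a b c where abc: "a < n" "b < n" "c < n"
    "p a \<in> left_box n" "p b \<in> right_box n" "p c \<in> low_box n k" "X \<subseteq> unit_square"
    unfolding X_def by metis
  have "fst (p a) < fst (p c)" "fst (p c) < fst (p b)"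
    using abc(4-6) column_range_inside_margins[OF \<open>n \<ge> 8\<close> \<open>1 \<le> k\<close> \<open>k \<le> n - 2\<close>]
    by (auto simp: left_box_def right_box_def low_box_def)
  then have "p a \<noteq> p b" "p a \<noteq> p c" "p b \<noteq> p c" by auto
  then have "card {p a, p b, p c} = 3" by simp
  moreover have "{p a, p b, p c} \<subseteq> X" using abc(1-3) by (auto simp: X_def)
  ultimately have card_X: "3 \<le> card X" "card X \<le> n"
    using card_mono[of X "{p a, p b, p c}"] card_image_le[of "{..<n}" p] by (auto simp: X_def)
  have "opt_length X \<le> 10 * sqrt (card X)"
    using opt_length_le_sqrt_card abc(7) card_X by (simp add: X_def)
  also have "\<dots> \<le> 10 * sqrt n" using card_X(2) by simp
  finally have "1/6 * card K / (10 * sqrt n) \<le> worst_xopt_length X / opt_length X"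
    using worst_xopt_length_ge_good_columns[OF assms] opt_length_pos[of X] card_X
    by (intro frac_le) (auto simp: X_def)
  then show ?thesis by (simp add: X_def)
qed

lemma emeasure_random_instance_PiE:
  assumes "\<And>i. i < n \<Longrightarrow> A i \<in> sets borel"
  shows "emeasure (random_instance n) (Pi\<^sub>E {..<n} A) = (\<Prod>i<n. emeasure square_measure (A i))"
proof -
  interpret product_sigma_finite "\<lambda>_::nat. square_measure"
    using prob_space_square_measure
    by (simp add: product_sigma_finite_def prob_space_imp_sigma_finite)
  show ?thesis unfolding random_instance_def by (rule emeasure_PiM) (use assms in auto)
qed

lemma region_in_sets_borel: "region n k \<tau> i \<in> sets borel"
  by (auto simp: region_def left_box_def right_box_def low_box_def mid_box_def rest_region_def
      column_range_def intro!: Times_in_sets_borel)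

lemma config_in_sets: "config n k \<tau> \<in> sets (random_instance n)"
  unfolding config_def random_instance_def
  by (rule sets_PiM_I_finite) (simp_all add: region_in_sets_borel)

lemma finite_tuples: "finite (tuples n)"
  by (rule finite_subset[OF _ finite_lists_length_eq[of "{..<n}" 4]]) (auto simp: tuples_def)

lemma good_column_in_sets: "good_column n k \<in> sets (random_instance n)"
  unfolding good_column_def by (rule sets.finite_UN) (simp_all add: finite_tuples config_in_sets)

lemma regions_disjoint:
  assumes k: "n \<ge> 8" "1 \<le> k" "k \<le> n - 2"
  shows "left_box n \<inter> right_box n = {}" "left_box n \<inter> low_box n k = {}"
    "left_box n \<inter> mid_box n k = {}" "left_box n \<inter> rest_region n k = {}"
    "right_box n \<inter> low_box n k = {}" "right_box n \<inter> mid_box n k = {}"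
    "right_box n \<inter> rest_region n k = {}" "low_box n k \<inter> mid_box n k = {}"
    "low_box n k \<inter> rest_region n k = {}" "mid_box n k \<inter> rest_region n k = {}"
proof -
  have m: "margin n < 1 - margin n" using margin_bounds[of n] k by auto
  have col: "x \<in> column_range n k \<Longrightarrow> margin n < x \<and> x < 1 - margin n" for x
    using column_range_inside_margins[OF k] by auto
  show "left_box n \<inter> right_box n = {}" "left_box n \<inter> low_box n k = {}"
    "left_box n \<inter> mid_box n k = {}" "left_box n \<inter> rest_region n k = {}"
    "right_box n \<inter> low_box n k = {}" "right_box n \<inter> mid_box n k = {}"
    "right_box n \<inter> rest_region n k = {}" "low_box n k \<inter> mid_box n k = {}"
    "low_box n k \<inter> rest_region n k = {}" "mid_box n k \<inter> rest_region n k = {}"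
    using m col by (fastforce simp: left_box_def right_box_def low_box_def mid_box_def rest_region_def)+
qed

lemma config_index_unique:
  assumes k: "n \<ge> 8" "1 \<le> k" "k \<le> n - 2"
    and \<tau>: "[a, b, c, d] \<in> tuples n" and p: "p \<in> config n k [a, b, c, d]" and i: "i < n"
  shows "p i \<in> left_box n \<Longrightarrow> i = a" "p i \<in> right_box n \<Longrightarrow> i = b"
    "p i \<in> low_box n k \<Longrightarrow> i = c" "p i \<in> mid_box n k \<Longrightarrow> i = d"
proof -
  have "distinct [a, b, c, d]" using \<tau> by (simp add: tuples_def)
  moreover have "p i \<in> region n k [a, b, c, d] i" using p i by (auto simp: config_def)
  ultimately show "p i \<in> left_box n \<Longrightarrow> i = a" "p i \<in> right_box n \<Longrightarrow> i = b"
    "p i \<in> low_box n k \<Longrightarrow> i = c" "p i \<in> mid_box n k \<Longrightarrow> i = d"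
    using regions_disjoint[OF k] by (auto simp: region_def split: if_splits)
qed

lemma disjoint_family_config:
  assumes k: "n \<ge> 8" "1 \<le> k" "k \<le> n - 2"
  shows "disjoint_family_on (config n k) (tuples n)"
  unfolding disjoint_family_on_def
proof (intro ballI impI, rule ccontr)
  fix \<tau> \<tau>' assume \<tau>\<tau>': "\<tau> \<in> tuples n" "\<tau>' \<in> tuples n" "\<tau> \<noteq> \<tau>'"
    and "config n k \<tau> \<inter> config n k \<tau>' \<noteq> {}"
  then obtain p where p: "p \<in> config n k \<tau>" "p \<in> config n k \<tau>'" by blast
  obtain a b c d where \<tau>: "\<tau> = [a, b, c, d]" "a < n" "b < n" "c < n" "d < n"
    using \<tau>\<tau>'(1) by (rule tuplesE)
  obtain a' b' c' d' where \<tau>': "\<tau>' = [a', b', c', d']"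
    using \<tau>\<tau>'(2) by (rule tuplesE)
  note boxes = config_geometry(1-4)[OF k \<tau>\<tau>'(1)[unfolded \<tau>(1)] p(1)[unfolded \<tau>(1)]]
  note unique = config_index_unique[OF k \<tau>\<tau>'(2)[unfolded \<tau>'(1)] p(2)[unfolded \<tau>'(1)]]
  have "a = a'" "b = b'" "c = c'" "d = d'"
    using unique(1)[OF \<tau>(2) boxes(1)] unique(2)[OF \<tau>(3) boxes(2)]
      unique(3)[OF \<tau>(4) boxes(3)] unique(4)[OF \<tau>(5) boxes(4)] by simp_all
  then show False using \<tau>\<tau>'(3) \<tau>(1) \<tau>'(1) by simp
qed

lemma prod_region:
  fixes g :: "point set \<Rightarrow> 'a::comm_monoid_mult"
  assumes "[a, b, c, d] \<in> tuples n"
  shows "(\<Prod>i<n. g (region n k [a, b, c, d] i)) =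
    g (left_box n) * g (right_box n) * g (low_box n k) * g (mid_box n k) * g (rest_region n k) ^ (n - 4)"
proof -
  have abcd: "distinct [a, b, c, d]" "{a, b, c, d} \<subseteq> {..<n}" using assms by (auto simp: tuples_def)
  have "(\<Prod>i<n. g (region n k [a, b, c, d] i)) =
      (\<Prod>i\<in>{a, b, c, d}. g (region n k [a, b, c, d] i)) *
      (\<Prod>i\<in>{..<n} - {a, b, c, d}. g (region n k [a, b, c, d] i))"
    using abcd(2) by (subst prod.subset_diff[of "{a, b, c, d}"]) (auto simp: mult.commute)
  also have "(\<Prod>i\<in>{..<n} - {a, b, c, d}. g (region n k [a, b, c, d] i)) = g (rest_region n k) ^ (n - 4)"
    using abcd by (subst prod.cong[OF refl, where h = "\<lambda>_. g (rest_region n k)"])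
      (auto simp: region_def card_Diff_subset numeral_eq_Suc)
  finally show ?thesis using abcd(1) by (simp add: region_def mult.assoc)
qed

lemma emeasure_config:
  assumes k: "n \<ge> 8" "1 \<le> k" "k \<le> n - 2" and "\<tau> \<in> tuples n"
  shows "emeasure (random_instance n) (config n k \<tau>) =
    ennreal ((1 / (24 * real n)) ^ 3 * (1 / (40 * real n)) * (1 - 3 / (4 * real n)) ^ (n - 4))"
proof -
  interpret prob_space square_measure by (rule prob_space_square_measure)
  obtain a b c d where \<tau>: "\<tau> = [a, b, c, d]" using \<open>\<tau> \<in> tuples n\<close> by (rule tuplesE)
  have "0 \<le> 1 - 3 / (4 * real n)" using k by (simp add: field_simps)
  have "emeasure (random_instance n) (config n k \<tau>) = (\<Prod>i<n. emeasure square_measure (region n k \<tau> i))"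
    unfolding config_def by (rule emeasure_random_instance_PiE) (simp add: region_in_sets_borel)
  also have "\<dots> = ennreal (\<Prod>i<n. measure square_measure (region n k \<tau> i))"
    by (simp add: emeasure_eq_measure prod_ennreal)
  finally show ?thesis
    using assms(4) \<open>0 \<le> 1 - 3 / (4 * real n)\<close> unfolding \<tau> prod_region[OF assms(4)[unfolded \<tau>]]
    by (simp add: measure_def emeasure_square_measure_regions[OF k] power3_eq_cube)
qed

lemma card_tuples_ge:
  assumes "n \<ge> 6"
  shows "real n ^ 4 / 16 \<le> card (tuples n)"
proof -
  have "real n / 2 \<le> real (n - 3)" using assms by linarith
  then have "(real n / 2) ^ 4 \<le> real (n - 3) ^ 4" by (rule power_mono) simp
  also have "(n - 3) ^ 4 \<le> card (tuples n)"
  proof -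
    have "Suc (n - 4) = n - 3" using assms by simp
    then have "card (tuples n) = \<Prod>{n - 3 .. n}"
      using card_lists_distinct_length_eq[of "{..<n}" 4] assms by (simp add: tuples_def conj_commute)
    then show ?thesis using prod_mono[of "{n - 3 .. n}" "\<lambda>_. n - 3" id] assms by simp
  qed
  then have "real (n - 3) ^ 4 \<le> card (tuples n)" by (metis of_nat_le_iff of_nat_power)
  finally show ?thesis by (simp add: power_divide)
qed

lemma emeasure_good_column_ge:
  assumes k: "n \<ge> 8" "1 \<le> k" "k \<le> n - 2"
  shows "ennreal (1 / (2^6 * 24^3 * 40)) \<le> emeasure (random_instance n) (good_column n k)"
proof -
  define V where "V = (1 / (24 * real n)) ^ 3 * (1 / (40 * real n)) * (1 - 3 / (4 * real n)) ^ (n - 4)"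
  have n: "real n \<ge> 8" using k by simp
  have "emeasure (random_instance n) (good_column n k) = (\<Sum>\<tau>\<in>tuples n. ennreal V)"
    unfolding good_column_def V_def
    by (subst sum_emeasure[symmetric])
      (auto simp: emeasure_config[OF k] finite_tuples config_in_sets disjoint_family_config[OF k])
  also have "\<dots> = ennreal (card (tuples n) * V)"
    by (simp add: ennreal_of_nat_eq_real_of_nat ennreal_mult')
  finally have eq: "emeasure (random_instance n) (good_column n k) = ennreal (card (tuples n) * V)" .
  have "1 + real (n - 4) * (- 3 / (4 * real n)) \<le> (1 + - 3 / (4 * real n)) ^ (n - 4)"
    using n by (intro Bernoulli_inequality) (simp add: field_simps)
  moreover have "real (n - 4) * (3 / (4 * real n)) \<le> 3 / 4"
    using n by (simp add: field_simps of_nat_diff)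
  ultimately have bernoulli: "1 / 4 \<le> (1 - 3 / (4 * real n)) ^ (n - 4)" by simp
  have "1 / (2^6 * 24^3 * 40) = real n ^ 4 / 16 * ((1 / (24 * real n)) ^ 3 * (1 / (40 * real n)) * (1 / 4))"
    using n by (simp add: field_simps power_numeral_reduce)
  also have "\<dots> \<le> card (tuples n) * V"
    unfolding V_def using card_tuples_ge[of n] k bernoulli by (intro mult_mono) auto
  finally show ?thesis unfolding eq by (rule ennreal_leI)
qed

lemma nn_integral_ge_expected_count:
  fixes \<beta> :: real
  assumes "finite K" "\<And>k. k \<in> K \<Longrightarrow> G k \<in> sets M" "0 \<le> \<beta>"
    and "\<And>x. x \<in> space M \<Longrightarrow> ennreal (\<beta> * card {k\<in>K. x \<in> G k}) \<le> f x"
  shows "ennreal \<beta> * (\<Sum>k\<in>K. emeasure M (G k)) \<le> (\<integral>\<^sup>+x. f x \<partial>M)"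
proof -
  have "(\<Sum>k\<in>K. indicator (G k) x) = (of_nat (card {k\<in>K. x \<in> G k}) :: ennreal)" for x
    using assms(1) by (simp add: indicator_def sum.If_cases Collect_conj_eq)
  then have count: "ennreal (\<beta> * card {k\<in>K. x \<in> G k}) = (\<Sum>k\<in>K. ennreal \<beta> * indicator (G k) x)" for x
    using assms(3) by (simp add: ennreal_mult' ennreal_of_nat_eq_real_of_nat flip: sum_distrib_left)
  have "ennreal \<beta> * (\<Sum>k\<in>K. emeasure M (G k)) = (\<integral>\<^sup>+x. (\<Sum>k\<in>K. ennreal \<beta> * indicator (G k) x) \<partial>M)"
    using assms(2) by (simp add: nn_integral_sum nn_integral_cmult_indicator sum_distrib_left)
  also have "\<dots> \<le> (\<integral>\<^sup>+x. f x \<partial>M)"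
    by (intro nn_integral_mono) (simp add: assms(4) flip: count)
  finally show ?thesis .
qed

lemma nn_integral_ratio_ge:
  assumes n: "n \<ge> 8"
  shows "ennreal ((real n - 2) / (2^6 * 24^3 * 40) / (60 * sqrt n)) \<le>
    (\<integral>\<^sup>+ p. ennreal (worst_xopt_length (p ` {..<n}) / opt_length (p ` {..<n})) \<partial>random_instance n)"
proof -
  define \<beta> where "\<beta> = 1 / (60 * sqrt (real n))"
  define c where "c = 1 / (2^6 * 24^3 * 40 :: real)"
  have "ennreal ((real n - 2) * c * \<beta>) = ennreal \<beta> * (\<Sum>k\<in>{1..n - 2}. ennreal c)"
    using n by (simp add: \<beta>_def c_def of_nat_diff ennreal_of_nat_eq_real_of_nat mult.commute
        flip: ennreal_mult)
  also have "\<dots> \<le> ennreal \<beta> * (\<Sum>k\<in>{1..n - 2}. emeasure (random_instance n) (good_column n k))"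
    using emeasure_good_column_ge[OF n] by (intro mult_left_mono sum_mono) (auto simp: c_def)
  also have "\<dots> \<le> (\<integral>\<^sup>+ p. ennreal (worst_xopt_length (p ` {..<n}) / opt_length (p ` {..<n})) \<partial>random_instance n)"
  proof (rule nn_integral_ge_expected_count)
    fix p
    define K where "K = {k \<in> {1..n - 2}. p \<in> good_column n k}"
    show "ennreal (\<beta> * card K) \<le> ennreal (worst_xopt_length (p ` {..<n}) / opt_length (p ` {..<n}))"
    proof (cases "K = {}")
      case False
      then have "card K / (60 * sqrt n) \<le> worst_xopt_length (p ` {..<n}) / opt_length (p ` {..<n})"
        by (intro ratio_ge_card_good_columns[OF n]) (auto simp: K_def)
      then show ?thesis by (intro ennreal_leI) (simp add: \<beta>_def)
    qed simp
  qed (simp_all add: \<beta>_def good_column_in_sets)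
  finally show ?thesis by (simp add: \<beta>_def c_def)
qed

theorem theorem3:
  shows "\<exists>c>0. \<exists>N. \<forall>n\<ge>N.
     (\<integral>\<^sup>+ p. ennreal (worst_xopt_length (p ` {..<n}) / opt_length (p ` {..<n}))
        \<partial>random_instance n) \<ge> ennreal (c * sqrt (real n))"
proof (intro exI[of _ "1 / (2^6 * 24^3 * 40) / 120"] conjI exI[of _ 8] allI impI)
  fix n :: nat assume n: "8 \<le> n"
  have "1 / (2^6 * 24^3 * 40) / 120 * sqrt n = (real n / 2) / (2^6 * 24^3 * 40) / (60 * sqrt n)"
    using n by (simp add: field_simps)
  also have "\<dots> \<le> (real n - 2) / (2^6 * 24^3 * 40) / (60 * sqrt n)"
    using n by (intro divide_right_mono) auto
  finally show "ennreal (1 / (2^6 * 24^3 * 40) / 120 * sqrt n) \<le>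
      (\<integral>\<^sup>+ p. ennreal (worst_xopt_length (p ` {..<n}) / opt_length (p ` {..<n})) \<partial>random_instance n)"
    using nn_integral_ratio_ge[OF n] ennreal_leI order_trans by blast
qed simp

end
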